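(* Let $\mathcal L:\mathbb F^{q\times q}\to\mathbb F^{n\times n}$ be $*$-linear, $m=\operatorname{rank}\mathbb L$, and let $L_1,\ldots,L_m$ and $L_1',\ldots,L_m'$ in $\mathbb F^{n\times q}$ both span $\operatorname{span}\{L_{ij}\}$. Let $A_k,B_k,\mathbb H$ be obtained from $L_1,\ldots,L_m$ by the construction below, and $A_k',B_k',\mathbb H'$ from $L_1',\ldots,L_m'$. Define $\widehat L,\widehat L',\widehat A,\widehat A'\in\mathbb F^{m\times nq}$ as the matrices whose $k$-th rows are $\operatorname{vec}_{n\times q}(\overline{L_k})^T$, $\operatorname{vec}_{n\times q}(\overline{L_k'})^T$, $\operatorname{vec}_{n\times q}(\overline{A_k})^T$, $\operatorname{vec}_{n\times q}(\overline{A_k'})^T$ respectively, and $$\Phi=[\vec{\mathbf 1}_n^*(B_k\circ\overline{A_l'})\vec{\mathbf 1}_q]_{k,l=1}^m,\qquad \Xi=[\vec{\mathbf 1}_n^*(B_k\circ\overline{L_l'})\vec{\mathbf 1}_q]_{k,l=1}^m.$$ Then $\widehat L=\overline{\mathbb H}\widehat A$, $\widehat L'=\overline{\mathbb H'}\widehat A'$, $\widehat L=\overline{\Phi}\widehat L'$, $\overline{\Phi}^*\widehat A=\widehat A'$, $\widehat L=\overline{\Xi}\widehat A'$, $\widehat L'=\overline{\Xi}^*\widehat A$, and $\mathbb H=\Phi\mathbb H'\Phi^*$. Moreover $\mathbb H=\Phi\Xi^*$, $\Phi\mathbb H'=\Xi$, $\Phi$ and $\Xi$ are invertible, $\Phi^{-1}=[\vec{\mathbf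 1}_n^*(B_k'\circ\overline{A_l})\vec{\mathbf 1}_q]_{k,l=1}^m$ and $\Xi^*=[\vec{\mathbf 1}_n^*(B_k'\circ\overline{L_l})\vec{\mathbf 1}_q]_{k,l=1}^m$. Finally $\ker\widehat L=\ker\widehat L'=\ker\widehat A=\ker\widehat A'=\ker\mathbb L$.
   Context: $\mathbb F\in\{\mathbb R,\mathbb C\}$; $\circ$ Hadamard product, $\vec{\mathbf 1}_p$ all-ones vector, $\overline X$ entrywise conjugate, $X^*$ conjugate transpose, $\operatorname{vec}$ column-stacking vectorization. Matricization $L\in\mathbb F^{n^2\times q^2}$ with $L\operatorname{vec}(V)=\operatorname{vec}(\mathcal L(V))$, blocks $L_{ij}\in\mathbb F^{n\times q}$ ($1\le i\le n$, $1\le j\le q$); Choi matrix $\mathbb L=[\mathcal L(\mathcal E^{(q)}_{ij})]_{i,j=1}^q$; $*$-linear: $\mathcal L(V^* )=\mathcal L(V)^*$. Construction: for $L_1,\ldots,L_m$ spanning $\operatorname{span}\{L_{ij}\}$ ($m=\operatorname{rank}\mathbb L$), let $L_{ij}=\sum_k\alpha^{ij}_kL_k$ (unique), $L_k=\sum_{i,j}\beta^k_{ij}L_{ij}$ (any choice); $A_k$ has $(i,j)$ entry $\overline{\alpha^{ij}_k}$, $B_k$ has $(i,j)$ entry $\beta^k_{ij}$, and $\mathbb H=[\vec{\mathbf 1}_n^*(B_k\circ\overline{L_l})\vec{\mathbf 1}_q]_{k,l=1}^m$. *)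

theory Defs
  imports "Jordan_Normal_Form.Schur_Decomposition" "Jordan_Normal_Form.DL_Rank" "Jordan_Normal_Form.Matrix_Kernel"
begin

text \<open>All indices are 0-based. Matrices are JNF matrices over a field with
  involution (conjugatable_field: covers both real, with trivial conjugation, and complex).\<close>

definition mat_conj :: "'a :: conjugatable_field mat \<Rightarrow> 'a mat" where
  "mat_conj A = map_mat conjugate A"

definition unit_mat :: "nat \<Rightarrow> nat \<Rightarrow> nat \<Rightarrow> 'a :: zero_neq_one mat" where
  "unit_mat q a b = mat q q (\<lambda>(x,y). if x = a \<and> y = b then 1 else 0)"

definition vecc :: "'a mat \<Rightarrow> 'a vec" where
  "vecc A = vec (dim_row A * dim_col A) (\<lambda>k. A $$ (k mod dim_row A, k div dim_row A))"

text \<open>Matricization of L : F^{q x q} -> F^{n x n}: the n^2 x q^2 matrix whose column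
  with index vec-position of E_{ab} is vec(L(E_{ab})), so that  Lmat *v vecc V = vecc (L V)
  for linear L.\<close>
definition matricization :: "('a :: zero_neq_one mat \<Rightarrow> 'a mat) \<Rightarrow> nat \<Rightarrow> nat \<Rightarrow> 'a mat" where
  "matricization \<L> n q = mat (n*n) (q*q) (\<lambda>(x,y). vecc (\<L> (unit_mat q (y mod q) (y div q))) $ x)"

definition Lblock :: "('a :: zero_neq_one mat \<Rightarrow> 'a mat) \<Rightarrow> nat \<Rightarrow> nat \<Rightarrow> nat \<Rightarrow> nat \<Rightarrow> 'a mat" where
  "Lblock \<L> n q i j = mat n q (\<lambda>(r,c). matricization \<L> n q $$ (i*n + r, j*q + c))"

definition choi :: "('a :: zero_neq_one mat \<Rightarrow> 'a mat) \<Rightarrow> nat \<Rightarrow> nat \<Rightarrow> 'a mat" where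
  "choi \<L> n q = mat (q*n) (q*n) (\<lambda>(x,y). \<L> (unit_mat q (x div n) (y div n)) $$ (x mod n, y mod n))"

definition star_linear :: "('a :: conjugatable_field mat \<Rightarrow> 'a mat) \<Rightarrow> nat \<Rightarrow> nat \<Rightarrow> bool" where
  "star_linear \<L> n q \<longleftrightarrow>
     (\<forall>V \<in> carrier_mat q q. \<L> V \<in> carrier_mat n n) \<and>
     (\<forall>V \<in> carrier_mat q q. \<forall>W \<in> carrier_mat q q. \<L> (V + W) = \<L> V + \<L> W) \<and>
     (\<forall>V \<in> carrier_mat q q. \<forall>c. \<L> (c \<cdot>\<^sub>m V) = c \<cdot>\<^sub>m \<L> V) \<and>
     (\<forall>V \<in> carrier_mat q q. \<L> (mat_adjoint V) = mat_adjoint (\<L> V))"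

definition mat_lincomb :: "nat \<Rightarrow> nat \<Rightarrow> 'b set \<Rightarrow> ('b \<Rightarrow> 'a :: comm_ring_1) \<Rightarrow> ('b \<Rightarrow> 'a mat) \<Rightarrow> 'a mat" where
  "mat_lincomb n q I c M = mat n q (\<lambda>(r,s). \<Sum>i\<in>I. c i * M i $$ (r,s))"

definition mat_span :: "nat \<Rightarrow> nat \<Rightarrow> 'b set \<Rightarrow> ('b \<Rightarrow> 'a :: comm_ring_1 mat) \<Rightarrow> 'a mat set" where
  "mat_span n q I M = {mat_lincomb n q I c M | c. True}"

definition hadamard :: "'a :: times mat \<Rightarrow> 'a mat \<Rightarrow> 'a mat" where
  "hadamard A B = mat (dim_row A) (dim_col A) (\<lambda>ij. A $$ ij * B $$ ij)"

definition ones_vec :: "nat \<Rightarrow> 'a :: one vec" where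
  "ones_vec n = vec n (\<lambda>_. 1)"

definition ones_form :: "'a :: conjugatable_field mat \<Rightarrow> 'a" where
  "ones_form X = conjugate (ones_vec (dim_row X)) \<bullet> (X *\<^sub>v ones_vec (dim_col X))"

definition gram_form :: "nat \<Rightarrow> (nat \<Rightarrow> 'a :: conjugatable_field mat) \<Rightarrow> (nat \<Rightarrow> 'a mat) \<Rightarrow> 'a mat" where
  "gram_form m X Y = mat m m (\<lambda>(k,l). ones_form (hadamard (X k) (mat_conj (Y l))))"

definition hat_mat :: "nat \<Rightarrow> nat \<Rightarrow> nat \<Rightarrow> (nat \<Rightarrow> 'a :: conjugatable_field mat) \<Rightarrow> 'a mat" where
  "hat_mat m n q X = mat m (n*q) (\<lambda>(k,x). vecc (mat_conj (X k)) $ x)"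

definition construction :: "('a :: conjugatable_field mat \<Rightarrow> 'a mat) \<Rightarrow> nat \<Rightarrow> nat \<Rightarrow> nat
    \<Rightarrow> (nat \<Rightarrow> 'a mat) \<Rightarrow> (nat \<Rightarrow> 'a mat) \<Rightarrow> (nat \<Rightarrow> 'a mat) \<Rightarrow> bool" where
  "construction \<L> n q m Ls A B \<longleftrightarrow>
     (\<forall>k<m. A k \<in> carrier_mat n q \<and> B k \<in> carrier_mat n q) \<and>
     (\<forall>i<n. \<forall>j<q. Lblock \<L> n q i j = mat_lincomb n q {..<m} (\<lambda>k. conjugate (A k $$ (i,j))) Ls) \<and>
     (\<forall>k<m. Ls k = mat_lincomb n q ({..<n} \<times> {..<q}) (\<lambda>(i,j). B k $$ (i,j)) (\<lambda>(i,j). Lblock \<L> n q i j))"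

end

theory Submission
  imports Defs
begin

(* Write hat(X) for the m x nq matrix whose k-th row is vec(conj X_k)^T and C for the Choi matrix,
   which is Hermitian because the map is *-linear. The two expansions of the construction say
   exactly C = hat(Ls)^* hat(A) and hat(Ls) = hat(B) C, and each Gram-type matrix is the conjugate
   of a product, conj(gram(X,Y)) = hat(X) hat(Y)^*. Since rank C = m, the first factorisation forces
   hat(Ls)^* to be injective, so hat(Ls) can be cancelled on the right. All identities then follow
   by matrix algebra from these facts for the two spanning families, which share C; for instance
   hat(Ls) = hat(B) C = hat(B) hat(A')^* hat(Ls') = conj(Phi) hat(Ls'), and
   conj(Phi) conj(Phi^-1) hat(Ls) = hat(Ls) yields Phi Phi^-1 = 1 after cancelling hat(Ls). *)

lemma conjugate_one [simp]: "conjugate (1 :: 'a :: conjugatable_field) = 1"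
  by (metis conjugate_dist_mul conjugate_zero_iff mult_cancel_left1)

text \<open>Unlike \<open>assoc_mult_mat\<close>, the side conditions are dimension equations, which the
  simplifier can discharge also when the factors are themselves products.\<close>

lemma mult_mat_assoc:
  fixes A :: "'a :: semiring_0 mat"
  assumes "dim_col A = dim_row B" "dim_col B = dim_row C"
  shows "A * B * C = A * (B * C)"
proof -
  have "A \<in> carrier_mat (dim_row A) (dim_col A)" "B \<in> carrier_mat (dim_col A) (dim_col B)"
    "C \<in> carrier_mat (dim_col B) (dim_col C)"
    using assms by (auto intro: carrier_matI)
  then show ?thesis by (rule assoc_mult_mat)
qed

lemma mat_conj_dim [simp]: "dim_row (mat_conj M) = dim_row M" "dim_col (mat_conj M) = dim_col M"
  unfolding mat_conj_def by auto

lemma mat_conj_index [simp]: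
  "i < dim_row M \<Longrightarrow> j < dim_col M \<Longrightarrow> mat_conj M $$ (i,j) = conjugate (M $$ (i,j))"
  unfolding mat_conj_def by auto

lemma mat_conj_conj [simp]: "mat_conj (mat_conj M) = M"
  by (rule eq_matI) auto

lemma mat_conj_inject: "mat_conj M = mat_conj M' \<Longrightarrow> M = M'"
  by (metis mat_conj_conj)

lemma mat_conj_one [simp]: "mat_conj (1\<^sub>m n) = 1\<^sub>m n"
  by (rule eq_matI) auto

lemma mat_conj_mult:
  assumes "dim_col A = dim_row B"
  shows "mat_conj (A * B) = mat_conj A * mat_conj B"
  using assms by (intro eq_matI) (auto simp: scalar_prod_def sum_conjugate conjugate_dist_mul)

lemma mat_adjoint_dim [simp]: "dim_row (mat_adjoint M) = dim_col M" "dim_col (mat_adjoint M) = dim_row M"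
  unfolding mat_adjoint_def by (auto simp: mat_of_rows_def)

lemma mat_adjoint_index [simp]:
  "i < dim_col M \<Longrightarrow> j < dim_row M \<Longrightarrow> mat_adjoint M $$ (i,j) = conjugate (M $$ (j,i))"
  unfolding mat_adjoint_def by (auto simp: mat_of_rows_def)

lemma mat_adjoint_carrier [simp]: "mat_adjoint M \<in> carrier_mat n k \<longleftrightarrow> M \<in> carrier_mat k n"
  unfolding carrier_mat_def by auto

lemma mat_adjoint_adjoint [simp]: "mat_adjoint (mat_adjoint M) = M"
  by (rule eq_matI) auto

lemma mat_adjoint_inject: "mat_adjoint M = mat_adjoint M' \<Longrightarrow> M = M'"
  by (metis mat_adjoint_adjoint)

lemma mat_adjoint_mult:
  assumes "dim_col A = dim_row B"
  shows "mat_adjoint (A * B) = mat_adjoint B * mat_adjoint A"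
  using assms by (intro eq_matI)
    (auto simp: scalar_prod_def sum_conjugate conjugate_dist_mul mult.commute)

lemma mat_adjoint_conj: "mat_adjoint (mat_conj M) = transpose_mat M"
  by (rule eq_matI) auto

lemma mat_conj_adjoint: "mat_conj (mat_adjoint M) = mat_adjoint (mat_conj M)"
  by (rule eq_matI) auto

lemma mat_kernel_mult_inj:
  fixes P :: "'a :: comm_ring_1 mat"
  assumes P: "P \<in> carrier_mat r k" and M: "M \<in> carrier_mat k N"
    and inj: "inj_on ((*\<^sub>v) P) (carrier_vec k)"
  shows "mat_kernel (P * M) = mat_kernel M"
proof (intro equalityI subsetI)
  fix v assume "v \<in> mat_kernel (P * M)"
  then have v: "v \<in> carrier_vec N" and eq: "P *\<^sub>v (M *\<^sub>v v) = P *\<^sub>v 0\<^sub>v k"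
    using P M by (auto simp: mat_kernel_def)
  have "M *\<^sub>v v = 0\<^sub>v k"
    by (rule inj_onD[OF inj eq]) (use M v in simp_all)
  then show "v \<in> mat_kernel M" using v M by (simp add: mat_kernel_def)
qed (rule mat_kernel_mult_subset[OF M P, THEN subsetD])

lemma inj_on_mult_mat_vec_right:
  assumes P: "P \<in> carrier_mat r k" and Q: "Q \<in> carrier_mat k m"
    and inj: "inj_on ((*\<^sub>v) (P * Q)) (carrier_vec m)"
  shows "inj_on ((*\<^sub>v) Q) (carrier_vec m)"
proof (rule inj_onI)
  fix v w assume v: "v \<in> carrier_vec m" and w: "w \<in> carrier_vec m" and eq: "Q *\<^sub>v v = Q *\<^sub>v w"
  have "(P * Q) *\<^sub>v v = (P * Q) *\<^sub>v w"
    using P Q v w eq by simp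
  then show "v = w" using v w by (rule inj_onD[OF inj])
qed

lemma inj_on_mult_mat_vec_left_inverse:
  fixes P :: "'a :: semiring_1 mat"
  assumes P: "P \<in> carrier_mat m r" and Q: "Q \<in> carrier_mat r m" and PQ: "P * Q = 1\<^sub>m m"
  shows "inj_on ((*\<^sub>v) Q) (carrier_vec m)"
proof (rule inj_on_mult_mat_vec_right[OF P Q])
  show "inj_on ((*\<^sub>v) (P * Q)) (carrier_vec m)"
    unfolding PQ by (rule inj_onI) simp
qed

lemma mult_adjoint_cancel_right:
  assumes M: "M \<in> carrier_mat m N" and X: "X \<in> carrier_mat k m" and Y: "Y \<in> carrier_mat k m"
    and inj: "inj_on ((*\<^sub>v) (mat_adjoint M)) (carrier_vec m)"
    and eq: "X * M = Y * M"
  shows "X = Y"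
proof -
  have adj: "mat_adjoint M * mat_adjoint X = mat_adjoint M * mat_adjoint Y"
    using arg_cong[OF eq, of mat_adjoint] M X Y by (simp add: mat_adjoint_mult)
  have aM: "mat_adjoint M \<in> carrier_mat N m" and aX: "mat_adjoint X \<in> carrier_mat m k"
    and aY: "mat_adjoint Y \<in> carrier_mat m k"
    using M X Y by simp_all
  have "col (mat_adjoint X) j = col (mat_adjoint Y) j" if j: "j < k" for j
  proof (rule inj_onD[OF inj])
    have "mat_adjoint M *\<^sub>v col (mat_adjoint X) j = col (mat_adjoint M * mat_adjoint X) j"
      by (rule col_mult2[OF aM aX j, symmetric])
    also have "\<dots> = mat_adjoint M *\<^sub>v col (mat_adjoint Y) j"
      unfolding adj by (rule col_mult2[OF aM aY j])
    finally show "mat_adjoint M *\<^sub>v col (mat_adjoint X) j = mat_adjoint M *\<^sub>v col (mat_adjoint Y) j" .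
  qed (use j aX aY in simp_all)
  then have "mat_adjoint X = mat_adjoint Y"
    using aX aY by (intro mat_col_eqI) simp_all
  then show ?thesis by (rule mat_adjoint_inject)
qed

lemma invertible_mat_if_inj_transpose:
  fixes M :: "'a :: field mat"
  assumes M: "M \<in> carrier_mat m m" and inj: "inj_on ((*\<^sub>v) (transpose_mat M)) (carrier_vec m)"
  shows "invertible_mat M"
proof -
  have "det (transpose_mat M) \<noteq> 0"
  proof
    assume "det (transpose_mat M) = 0"
    then obtain v where v: "v \<in> carrier_vec m" "v \<noteq> 0\<^sub>v m" "transpose_mat M *\<^sub>v v = 0\<^sub>v m"
      using det_0_iff_vec_prod_zero_field[of "transpose_mat M" m] M by auto
    have "transpose_mat M *\<^sub>v v = transpose_mat M *\<^sub>v 0\<^sub>v m"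
      using M v by (auto intro!: eq_vecI)
    then have "v = 0\<^sub>v m" using v(1) by (rule inj_onD[OF inj]) simp
    with v show False by simp
  qed
  then have "det M \<noteq> 0" using det_transpose[OF M] by simp
  from det_non_zero_imp_unit[OF M this, of "()"]
  obtain M' where "M' \<in> carrier_mat m m" "M * M' = 1\<^sub>m m" "M' * M = 1\<^sub>m m"
    unfolding Units_def ring_mat_def by auto
  then show ?thesis using M unfolding invertible_mat_def inverts_mat_def by auto
qed

lemma (in vec_space) rank_mult_le:
  assumes P: "P \<in> carrier_mat n nc" and Q: "Q \<in> carrier_mat nc k"
  shows "rank (P * Q) \<le> rank P"
proof -
  define S where "S = set (cols P)"
  have Sc: "S \<subseteq> carrier_vec n" unfolding S_def using P cols_dim by blast
  have PQ: "P * Q \<in> carrier_mat n k" using P Q by auto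
  have sub: "set (cols (P*Q)) \<subseteq> span S"
  proof
    fix v assume "v \<in> set (cols (P*Q))"
    then obtain j where j: "j < dim_col (P*Q)" "v = col (P*Q) j" by (metis cols_length cols_nth in_set_conv_nth)
    then have "v = P *\<^sub>v col Q j" using col_mult2[OF P Q, of j] Q by simp
    moreover have "col Q j \<in> carrier_vec (dim_col P)" using P Q j by auto
    ultimately have "v \<in> col_space P" using P unfolding col_space_eq[OF P] by auto
    then show "v \<in> span S" unfolding col_space_def S_def .
  qed
  have vs: "vectorspace class_ring (vs (span S))" using span_is_subspace[THEN subspace_is_vs, OF Sc] by auto
  have sm: "submodule class_ring (span S) V" using Sc by (simp add: span_is_submodule)
  have "VectorSpace.subspace class_ring (span (set (cols (P*Q)))) (vs (span S))"
    using vectorspace.span_is_subspace[OF vs, of "set (cols (P*Q))", unfolded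
      span_li_not_depend(1)[OF sub sm]] sub by auto
  moreover have fin_dim: "vectorspace.fin_dim class_ring (vs (span S))"
       "vectorspace.fin_dim class_ring (vs (span S)\<lparr>carrier := span (set (cols (P*Q)))\<rparr>)"
    using fin_dim_span_cols P PQ unfolding S_def by auto
  ultimately show ?thesis unfolding rank_def S_def
    using vectorspace.subspace_dim[OF vs[unfolded S_def]] fin_dim unfolding S_def by auto
qed

lemma (in vec_space) rank_less_if_nonzero_kernel:
  assumes P: "P \<in> carrier_mat n nc" and v: "v \<in> carrier_vec nc" "v \<noteq> 0\<^sub>v nc" "P *\<^sub>v v = 0\<^sub>v n"
  shows "rank P < nc"
proof (rule ccontr)
  assume "\<not> rank P < nc"
  then have r: "rank P = nc" using rank_le_nc[OF P] by auto
  show False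
  proof (cases "distinct (cols P)")
    case True
    then show False using full_rank_lin_indpt[OF P r True] lin_depI[OF P v True] by blast
  next
    case False
    obtain S where S: "maximal S (\<lambda>T. T \<subseteq> set (cols P) \<and> lin_indpt T)"
      using maximal_exists[of "(\<lambda>T. T \<subseteq> set (cols P) \<and> lin_indpt T)" "card (set (cols P))" "{}"]
      by (meson List.finite_set card_mono empty_iff empty_subsetI finite_lin_indpt2 rev_finite_subset)
    then have "card S \<le> card (set (cols P))" by (simp add: card_mono maximal_def)
    moreover have "card (set (cols P)) < length (cols P)"
      using False card_distinct card_length le_neq_implies_less by blast
    ultimately have "card S < nc" using P by auto
    then show False using rank_card_indpt[OF P S] r by simp
  qed
qed

lemma (in vec_space) inj_on_mult_mat_vec_if_rank_mult:
  assumes P: "P \<in> carrier_mat n m" and Q: "Q \<in> carrier_mat m k" and rank: "rank (P * Q) = m"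
  shows "inj_on ((*\<^sub>v) P) (carrier_vec m)"
proof (rule inj_onI, rule ccontr)
  fix v w assume v: "v \<in> carrier_vec m" and w: "w \<in> carrier_vec m"
    and eq: "P *\<^sub>v v = P *\<^sub>v w" and ne: "v \<noteq> w"
  have "v - w \<in> carrier_vec m" using v w by simp
  moreover have "v - w \<noteq> 0\<^sub>v m"
    using v w ne by (metis comm_add_vec minus_add_minus_vec minus_cancel_vec uminus_eq_vec zero_minus_vec)
  moreover have "P *\<^sub>v (v - w) = 0\<^sub>v n"
    using mult_minus_distrib_mat_vec[OF P v w] eq P w by simp
  ultimately have "rank P < m" by (rule rank_less_if_nonzero_kernel[OF P])
  with rank_mult_le[OF P Q] rank show False by simp
qed

text \<open>\<open>C\<close>, \<open>L\<close>, \<open>A\<close>, \<open>B\<close> abstract the Choi matrix and \<open>hat(Ls)\<close>, \<open>hat(A)\<close>,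
  \<open>hat(B)\<close>; injectivity of \<open>L\<^sup>*\<close> is linear independence of the rows of \<open>L\<close>.\<close>

locale choi_factorization =
  fixes C :: "'a :: conjugatable_field mat" and N m :: nat and L A B :: "'a mat"
  assumes C_carrier: "C \<in> carrier_mat N N"
    and L_carrier: "L \<in> carrier_mat m N"
    and A_carrier: "A \<in> carrier_mat m N"
    and B_carrier: "B \<in> carrier_mat m N"
    and C_hermitian: "mat_adjoint C = C"
    and C_factor: "C = mat_adjoint L * A"
    and L_expansion: "L = B * C"
    and L_independent: "inj_on ((*\<^sub>v) (mat_adjoint L)) (carrier_vec m)"
begin

abbreviation H :: "'a mat" where "H \<equiv> B * mat_adjoint L"

lemma dims [simp]:
  "dim_row C = N" "dim_col C = N" "dim_row L = m" "dim_col L = N"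
  "dim_row A = m" "dim_col A = N" "dim_row B = m" "dim_col B = N"
  using C_carrier L_carrier A_carrier B_carrier by auto

lemma adjoint_carriers:
  "mat_adjoint L \<in> carrier_mat N m" "mat_adjoint A \<in> carrier_mat N m" "mat_adjoint B \<in> carrier_mat N m"
  using L_carrier A_carrier B_carrier by simp_all

lemma C_factor_adjoint: "C = mat_adjoint A * L"
proof -
  have "mat_adjoint C = mat_adjoint A * L"
    unfolding C_factor by (simp add: mat_adjoint_mult)
  then show ?thesis by (simp add: C_hermitian)
qed

lemma L_adjoint: "mat_adjoint L = C * mat_adjoint B"
proof -
  have "mat_adjoint L = mat_adjoint C * mat_adjoint B"
    by (subst L_expansion) (simp add: mat_adjoint_mult)
  then show ?thesis by (simp add: C_hermitian)
qed

lemma cancel_L: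
  assumes "X \<in> carrier_mat k m" "Y \<in> carrier_mat k m" "X * L = Y * L"
  shows "X = Y"
  by (rule mult_adjoint_cancel_right[OF L_carrier assms(1,2) L_independent assms(3)])

lemma B_mult_adjoint_A: "B * mat_adjoint A = 1\<^sub>m m"
proof (rule cancel_L[where k = m])
  have "B * mat_adjoint A * L = B * C"
    by (simp add: mult_mat_assoc C_factor_adjoint)
  also have "\<dots> = 1\<^sub>m m * L"
    using L_carrier by (simp add: L_expansion[symmetric])
  finally show "B * mat_adjoint A * L = 1\<^sub>m m * L" .
qed (use B_carrier adjoint_carriers in simp_all)

lemma A_independent: "inj_on ((*\<^sub>v) (mat_adjoint A)) (carrier_vec m)"
  by (rule inj_on_mult_mat_vec_left_inverse[OF B_carrier adjoint_carriers(2) B_mult_adjoint_A])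

lemma mat_kernel_A: "mat_kernel A = mat_kernel C"
  unfolding C_factor
  by (rule mat_kernel_mult_inj[symmetric, OF adjoint_carriers(1) A_carrier L_independent])

lemma mat_kernel_L: "mat_kernel L = mat_kernel C"
  unfolding C_factor_adjoint
  by (rule mat_kernel_mult_inj[symmetric, OF adjoint_carriers(2) L_carrier A_independent])

lemma H_eq_congruence: "H = B * C * mat_adjoint B"
  by (simp add: L_adjoint mult_mat_assoc)

lemma H_hermitian: "mat_adjoint H = H"
  by (simp add: H_eq_congruence mat_adjoint_mult mult_mat_assoc C_hermitian)

lemma L_eq_H_mult_A: "L = H * A"
  by (simp add: mult_mat_assoc C_factor[symmetric] L_expansion[symmetric])

lemma adjoint_A_mult_H: "mat_adjoint A * H = mat_adjoint L"
proof -
  have "mat_adjoint L = mat_adjoint A * mat_adjoint H"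
    by (subst L_eq_H_mult_A) (simp add: mat_adjoint_mult)
  then show ?thesis by (simp add: H_hermitian)
qed

end

text \<open>\<open>f.H\<close>, \<open>g.H\<close>, \<open>Phi\<close>, \<open>Xi\<close> and \<open>Phi_inv\<close> are the entrywise conjugates of
  \<open>H\<close>, \<open>H'\<close>, \<open>\<Phi>\<close>, \<open>\<Xi>\<close> and \<open>\<Phi>\<^sup>-\<^sup>1\<close> in the theorem (lemma \<open>gram_form_conj\<close>).\<close>

locale two_choi_factorizations =
  f: choi_factorization C N m L A B + g: choi_factorization C N m L' A' B'
  for C :: "'a :: conjugatable_field mat" and N m L A B L' A' B'
begin

abbreviation Phi :: "'a mat" where "Phi \<equiv> B * mat_adjoint A'"
abbreviation Xi :: "'a mat" where "Xi \<equiv> B * mat_adjoint L'"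
abbreviation Phi_inv :: "'a mat" where "Phi_inv \<equiv> B' * mat_adjoint A"

lemma L_eq_Phi_mult_L': "L = Phi * L'"
  by (simp add: mult_mat_assoc g.C_factor_adjoint[symmetric] f.L_expansion[symmetric])

lemma L_eq_Xi_mult_A': "L = Xi * A'"
  by (simp add: mult_mat_assoc g.C_factor[symmetric] f.L_expansion[symmetric])

lemma Xi_adjoint: "mat_adjoint Xi = B' * mat_adjoint L"
proof -
  have "mat_adjoint Xi = B' * C * mat_adjoint B"
    by (simp add: mat_adjoint_mult g.L_expansion[symmetric])
  then show ?thesis by (simp add: mult_mat_assoc f.L_adjoint)
qed

lemma A'_eq_adjoint_Phi_mult_A: "A' = mat_adjoint Phi * A"
proof -
  have "mat_adjoint A * Phi * L' = mat_adjoint A * L"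
    by (simp add: mult_mat_assoc L_eq_Phi_mult_L')
  also have "\<dots> = mat_adjoint A' * L'"
    by (simp add: f.C_factor_adjoint[symmetric] g.C_factor_adjoint[symmetric])
  finally have "mat_adjoint A * Phi = mat_adjoint A'"
    by (rule g.cancel_L[where k = N, rotated 2]) (rule carrier_matI; simp)+
  then have "mat_adjoint (mat_adjoint Phi * A) = mat_adjoint A'"
    by (simp add: mat_adjoint_mult)
  then show ?thesis by (rule mat_adjoint_inject[THEN sym])
qed

lemma Phi_mult_Phi_inv: "Phi * Phi_inv = 1\<^sub>m m"
proof (rule f.cancel_L[where k = m])
  have "Phi * Phi_inv * L = Phi * L'"
    by (simp add: mult_mat_assoc f.C_factor_adjoint[symmetric] g.L_expansion[symmetric])
  also have "\<dots> = 1\<^sub>m m * L"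
    using f.L_carrier by (simp add: L_eq_Phi_mult_L'[symmetric])
  finally show "Phi * Phi_inv * L = 1\<^sub>m m * L" .
qed (rule carrier_matI; simp)+

lemma H_eq_Phi_mult_adjoint_Xi: "f.H = Phi * mat_adjoint Xi"
proof -
  have "Phi * mat_adjoint Xi = B * (mat_adjoint A' * L') * mat_adjoint B"
    by (simp add: mat_adjoint_mult mult_mat_assoc)
  then show ?thesis by (simp add: g.C_factor_adjoint[symmetric] f.H_eq_congruence)
qed

lemma Phi_mult_H'_eq_Xi: "Phi * g.H = Xi"
  by (simp add: mult_mat_assoc g.adjoint_A_mult_H)

lemma H_congruence: "f.H = Phi * g.H * mat_adjoint Phi"
proof -
  have "mat_adjoint Xi = g.H * mat_adjoint Phi"
    unfolding Phi_mult_H'_eq_Xi[symmetric] by (simp add: mat_adjoint_mult g.H_hermitian)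
  then show ?thesis by (simp add: H_eq_Phi_mult_adjoint_Xi mult_mat_assoc)
qed

lemma Xi_adjoint_independent: "inj_on ((*\<^sub>v) (mat_adjoint Xi)) (carrier_vec m)"
proof (rule inj_on_mult_mat_vec_right)
  have "mat_adjoint L = mat_adjoint A' * mat_adjoint Xi"
    by (subst L_eq_Xi_mult_A') (simp add: mat_adjoint_mult)
  then show "inj_on ((*\<^sub>v) (mat_adjoint A' * mat_adjoint Xi)) (carrier_vec m)"
    using f.L_independent by simp
qed (rule carrier_matI; simp)+

end

lemma mod_div_less_mult:
  fixes n q x :: nat
  assumes "x < n * q"
  shows "x mod n < n" "x div n < q"
proof -
  have "n > 0" using assms by (cases n) auto
  then show "x mod n < n" "x div n < q"
    using assms by (auto simp: div_less_iff_less_mult mult.commute)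
qed

lemma mult_add_less_mult:
  fixes i r a b :: nat
  assumes "i < a" "r < b"
  shows "i * b + r < a * b"
proof -
  have "i * b + r < Suc i * b" using assms by simp
  also have "\<dots> \<le> a * b" using assms by (intro mult_le_mono1) simp
  finally show ?thesis .
qed

lemma sum_mod_div_pairs:
  fixes n q :: nat
  shows "(\<Sum>x<n*q. f (x mod n, x div n)) = (\<Sum>p\<in>{..<n}\<times>{..<q}. f p)"
proof (rule sum.reindex_bij_witness[where i = "\<lambda>(i,j). i + j*n" and j = "\<lambda>x. (x mod n, x div n)"])
  fix p assume "p \<in> {..<n}\<times>{..<q}"
  then obtain i j where p: "p = (i,j)" "i < n" "j < q" by blast
  have "i + j*n < Suc j * n" using p by simp
  also have "\<dots> \<le> q * n" using p by (intro mult_le_mono1) simp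
  also have "\<dots> = n * q" by (rule mult.commute)
  finally show "(case p of (i, j) \<Rightarrow> i + j*n) \<in> {..<n*q}" using p by simp
  show "((case p of (i, j) \<Rightarrow> i + j*n) mod n, (case p of (i, j) \<Rightarrow> i + j*n) div n) = p"
    using p by simp
qed (auto dest: mod_div_less_mult)

lemma hat_mat_dim [simp]: "dim_row (hat_mat m n q X) = m" "dim_col (hat_mat m n q X) = n*q"
  unfolding hat_mat_def by simp_all

lemma hat_mat_carrier: "hat_mat m n q X \<in> carrier_mat m (n*q)"
  by (simp add: carrier_matI)

lemma hat_mat_index:
  assumes "X k \<in> carrier_mat n q" "k < m" "x < n*q"
  shows "hat_mat m n q X $$ (k,x) = conjugate (X k $$ (x mod n, x div n))"
  using assms mod_div_less_mult[OF assms(3)] unfolding hat_mat_def vecc_def by simp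

lemma ones_form_sum:
  assumes "X \<in> carrier_mat n q"
  shows "ones_form X = (\<Sum>p\<in>{..<n}\<times>{..<q}. X $$ p)"
  using assms unfolding ones_form_def ones_vec_def
  by (simp add: scalar_prod_def lessThan_atLeast0 sum.cartesian_product)

lemma gram_form_dim [simp]: "dim_row (gram_form m X Y) = m" "dim_col (gram_form m X Y) = m"
  unfolding gram_form_def by simp_all

lemma gram_form_conj:
  assumes X: "\<forall>k<m. X k \<in> carrier_mat n q" and Y: "\<forall>k<m. Y k \<in> carrier_mat n q"
  shows "mat_conj (gram_form m X Y) = hat_mat m n q X * mat_adjoint (hat_mat m n q Y)"
proof (rule eq_matI)
  fix k l assume "k < dim_row (hat_mat m n q X * mat_adjoint (hat_mat m n q Y))"
    "l < dim_col (hat_mat m n q X * mat_adjoint (hat_mat m n q Y))"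
  then have k: "k < m" and l: "l < m" by simp_all
  have Xk: "X k \<in> carrier_mat n q" and Yl: "Y l \<in> carrier_mat n q" using X Y k l by simp_all
  have had: "hadamard (X k) (mat_conj (Y l)) \<in> carrier_mat n q"
    using Xk unfolding hadamard_def by auto
  have "mat_conj (gram_form m X Y) $$ (k,l) = (\<Sum>p\<in>{..<n}\<times>{..<q}. conjugate (X k $$ p) * Y l $$ p)"
    using k l Xk Yl ones_form_sum[OF had] unfolding gram_form_def
    by (auto simp: hadamard_def sum_conjugate conjugate_dist_mul intro!: sum.cong)
  also have "\<dots> = (\<Sum>x<n*q. hat_mat m n q X $$ (k,x) * conjugate (hat_mat m n q Y $$ (l,x)))"
    using k l X Y by (simp add: sum_mod_div_pairs[symmetric] hat_mat_index)
  also have "\<dots> = (hat_mat m n q X * mat_adjoint (hat_mat m n q Y)) $$ (k,l)"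
    using k l by (simp add: scalar_prod_def lessThan_atLeast0)
  finally show "mat_conj (gram_form m X Y) $$ (k,l) = (hat_mat m n q X * mat_adjoint (hat_mat m n q Y)) $$ (k,l)" .
qed (simp_all add: gram_form_def hat_mat_def)

lemma unit_mat_carrier: "unit_mat q a b \<in> carrier_mat q q"
  unfolding unit_mat_def by simp

lemma unit_mat_adjoint:
  "a < q \<Longrightarrow> b < q \<Longrightarrow> mat_adjoint (unit_mat q a b :: 'a :: conjugatable_field mat) = unit_mat q b a"
  by (rule eq_matI) (auto simp: unit_mat_def)

lemma star_linear_carrier:
  "star_linear \<L> n q \<Longrightarrow> V \<in> carrier_mat q q \<Longrightarrow> \<L> V \<in> carrier_mat n n"
  unfolding star_linear_def by blast

lemma choi_dim [simp]: "dim_row (choi \<L> n q) = n*q" "dim_col (choi \<L> n q) = n*q"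
  unfolding choi_def by (simp_all add: mult.commute)

lemma choi_carrier: "choi \<L> n q \<in> carrier_mat (n*q) (n*q)"
  by (simp add: carrier_matI)

lemma choi_index:
  "x < n*q \<Longrightarrow> y < n*q \<Longrightarrow>
    choi \<L> n q $$ (x,y) = \<L> (unit_mat q (x div n) (y div n)) $$ (x mod n, y mod n)"
  unfolding choi_def by (simp add: mult.commute)

lemma choi_hermitian:
  assumes "star_linear \<L> n q"
  shows "mat_adjoint (choi \<L> n q) = choi \<L> n q"
proof (rule eq_matI)
  fix x y assume "x < dim_row (choi \<L> n q)" "y < dim_col (choi \<L> n q)"
  then have x: "x < n*q" and y: "y < n*q" by simp_all
  have "\<L> (unit_mat q (x div n) (y div n)) = \<L> (mat_adjoint (unit_mat q (y div n) (x div n)))"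
    using x y by (simp add: unit_mat_adjoint mod_div_less_mult)
  also have "\<dots> = mat_adjoint (\<L> (unit_mat q (y div n) (x div n)))"
    using assms unit_mat_carrier unfolding star_linear_def by blast
  moreover have "\<L> (unit_mat q (y div n) (x div n)) \<in> carrier_mat n n"
    by (rule star_linear_carrier[OF assms unit_mat_carrier])
  ultimately show "mat_adjoint (choi \<L> n q) $$ (x,y) = choi \<L> n q $$ (x,y)"
    using x y mod_div_less_mult[OF x] mod_div_less_mult[OF y] by (simp add: choi_index)
qed simp_all

lemma Lblock_index:
  assumes "star_linear \<L> n q" "i < n" "j < q" "r < n" "s < q"
  shows "Lblock \<L> n q i j $$ (r,s) = \<L> (unit_mat q s j) $$ (r,i)"
proof -
  have "\<L> (unit_mat q s j) \<in> carrier_mat n n"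
    by (rule star_linear_carrier[OF assms(1) unit_mat_carrier])
  moreover have "i*n + r < n*n" "j*q + s < q*q"
    using assms by (simp_all add: mult_add_less_mult)
  ultimately show ?thesis
    using assms unfolding Lblock_def matricization_def vecc_def by (simp add: mult.commute)
qed

lemma choi_eq_Lblock:
  assumes "star_linear \<L> n q" "x < n*q" "y < n*q"
  shows "choi \<L> n q $$ (x,y) = Lblock \<L> n q (y mod n) (y div n) $$ (x mod n, x div n)"
  using assms mod_div_less_mult[OF assms(2)] mod_div_less_mult[OF assms(3)]
  by (simp add: choi_index Lblock_index)

lemma construction_choi_factor:
  assumes lin: "star_linear \<L> n q" and constr: "construction \<L> n q m Ls A B"
    and Ls: "\<forall>k<m. Ls k \<in> carrier_mat n q"
  shows "choi \<L> n q = mat_adjoint (hat_mat m n q Ls) * hat_mat m n q A"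
proof (rule eq_matI)
  fix x y assume "x < dim_row (mat_adjoint (hat_mat m n q Ls) * hat_mat m n q A)"
    "y < dim_col (mat_adjoint (hat_mat m n q Ls) * hat_mat m n q A)"
  then have x: "x < n*q" and y: "y < n*q" by simp_all
  note px = mod_div_less_mult[OF x] and py = mod_div_less_mult[OF y]
  have A: "A k \<in> carrier_mat n q" if "k < m" for k
    using constr that unfolding construction_def by blast
  have "Lblock \<L> n q (y mod n) (y div n) = mat_lincomb n q {..<m} (\<lambda>k. conjugate (A k $$ (y mod n, y div n))) Ls"
    using constr py unfolding construction_def by blast
  then have "choi \<L> n q $$ (x,y) = (\<Sum>k<m. conjugate (A k $$ (y mod n, y div n)) * Ls k $$ (x mod n, x div n))"
    using choi_eq_Lblock[OF lin x y] px unfolding mat_lincomb_def by simp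
  also have "\<dots> = (mat_adjoint (hat_mat m n q Ls) * hat_mat m n q A) $$ (x,y)"
    using x y Ls A by (auto simp: scalar_prod_def lessThan_atLeast0 hat_mat_index mult.commute intro!: sum.cong)
  finally show "choi \<L> n q $$ (x,y) = (mat_adjoint (hat_mat m n q Ls) * hat_mat m n q A) $$ (x,y)" .
qed simp_all

lemma construction_hat_expansion:
  assumes lin: "star_linear \<L> n q" and constr: "construction \<L> n q m Ls A B"
    and Ls: "\<forall>k<m. Ls k \<in> carrier_mat n q"
  shows "hat_mat m n q Ls = hat_mat m n q B * choi \<L> n q"
proof (rule eq_matI)
  fix k x assume "k < dim_row (hat_mat m n q B * choi \<L> n q)" "x < dim_col (hat_mat m n q B * choi \<L> n q)"
  then have k: "k < m" and x: "x < n*q" by simp_all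
  note px = mod_div_less_mult[OF x]
  have B: "B k \<in> carrier_mat n q"
    using constr k unfolding construction_def by blast
  have "Ls k = mat_lincomb n q ({..<n} \<times> {..<q}) (\<lambda>(i,j). B k $$ (i,j)) (\<lambda>(i,j). Lblock \<L> n q i j)"
    using constr k unfolding construction_def by blast
  then have "Ls k $$ (x mod n, x div n)
      = (\<Sum>p\<in>{..<n} \<times> {..<q}. B k $$ p * Lblock \<L> n q (fst p) (snd p) $$ (x mod n, x div n))"
    using px unfolding mat_lincomb_def by (simp add: case_prod_beta')
  also have "\<dots> = (\<Sum>y<n*q. B k $$ (y mod n, y div n) * choi \<L> n q $$ (x,y))"
    using x by (simp add: sum_mod_div_pairs[symmetric] choi_eq_Lblock[OF lin])
  finally have "hat_mat m n q Ls $$ (k,x) = (hat_mat m n q B * mat_adjoint (choi \<L> n q)) $$ (k,x)"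
    using k x Ls B by (simp add: hat_mat_index scalar_prod_def lessThan_atLeast0 sum_conjugate conjugate_dist_mul)
  then show "hat_mat m n q Ls $$ (k,x) = (hat_mat m n q B * choi \<L> n q) $$ (k,x)"
    by (simp add: choi_hermitian[OF lin])
qed simp_all

lemma construction_carriers:
  "construction \<L> n q m Ls A B \<Longrightarrow> \<forall>k<m. A k \<in> carrier_mat n q \<and> B k \<in> carrier_mat n q"
  unfolding construction_def by blast

lemma construction_choi_factorization:
  assumes lin: "star_linear \<L> n q" and rank: "m = vec_space.rank (q*n) (choi \<L> n q)"
    and Ls: "\<forall>k<m. Ls k \<in> carrier_mat n q" and constr: "construction \<L> n q m Ls A B"
  shows "choi_factorization (choi \<L> n q) (n*q) m (hat_mat m n q Ls) (hat_mat m n q A) (hat_mat m n q B)"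
proof
  have factor: "choi \<L> n q = mat_adjoint (hat_mat m n q Ls) * hat_mat m n q A"
    by (rule construction_choi_factor[OF lin constr Ls])
  then show "choi \<L> n q = mat_adjoint (hat_mat m n q Ls) * hat_mat m n q A" .
  have "vec_space.rank (n*q) (mat_adjoint (hat_mat m n q Ls) * hat_mat m n q A) = m"
    using rank factor by (metis mult.commute)
  moreover have "mat_adjoint (hat_mat m n q Ls) \<in> carrier_mat (n*q) m"
    by (simp add: hat_mat_carrier)
  ultimately show "inj_on ((*\<^sub>v) (mat_adjoint (hat_mat m n q Ls))) (carrier_vec m)"
    using vec_space.inj_on_mult_mat_vec_if_rank_mult[OF _ hat_mat_carrier] by blast
  show "hat_mat m n q Ls = hat_mat m n q B * choi \<L> n q"
    by (rule construction_hat_expansion[OF lin constr Ls])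
qed (simp_all add: choi_carrier hat_mat_carrier choi_hermitian[OF lin])

theorem theorem5p9:
  fixes \<L> :: "'a :: conjugatable_field mat \<Rightarrow> 'a mat"
    and n q m :: nat
    and Ls Ls' A B A' B' :: "nat \<Rightarrow> 'a mat"
  assumes starlin: "star_linear \<L> n q"
    and rank: "m = vec_space.rank (q*n) (choi \<L> n q)"
    and Ls_carr: "\<forall>k<m. Ls k \<in> carrier_mat n q"
    and Ls'_carr: "\<forall>k<m. Ls' k \<in> carrier_mat n q"
    and span: "mat_span n q {..<m} Ls = mat_span n q ({..<n} \<times> {..<q}) (\<lambda>(i,j). Lblock \<L> n q i j)"
    and span': "mat_span n q {..<m} Ls' = mat_span n q ({..<n} \<times> {..<q}) (\<lambda>(i,j). Lblock \<L> n q i j)"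
    and constr: "construction \<L> n q m Ls A B"
    and constr': "construction \<L> n q m Ls' A' B'"
  defines "H \<equiv> gram_form m B Ls"
    and "H' \<equiv> gram_form m B' Ls'"
    and "Lh \<equiv> hat_mat m n q Ls"
    and "Lh' \<equiv> hat_mat m n q Ls'"
    and "Ah \<equiv> hat_mat m n q A"
    and "Ah' \<equiv> hat_mat m n q A'"
    and "\<Phi> \<equiv> gram_form m B A'"
    and "\<Xi> \<equiv> gram_form m B Ls'"
  shows "Lh = mat_conj H * Ah \<and> Lh' = mat_conj H' * Ah' \<and> Lh = mat_conj \<Phi> * Lh'
       \<and> mat_adjoint (mat_conj \<Phi>) * Ah = Ah' \<and> Lh = mat_conj \<Xi> * Ah'
       \<and> Lh' = mat_adjoint (mat_conj \<Xi>) * Ah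
       \<and> H = \<Phi> * H' * mat_adjoint \<Phi>
       \<and> H = \<Phi> * mat_adjoint \<Xi> \<and> \<Phi> * H' = \<Xi>
       \<and> invertible_mat \<Phi> \<and> invertible_mat \<Xi>
       \<and> \<Phi> * gram_form m B' A = 1\<^sub>m m \<and> gram_form m B' A * \<Phi> = 1\<^sub>m m
       \<and> mat_adjoint \<Xi> = gram_form m B' Ls
       \<and> mat_kernel Lh = mat_kernel (choi \<L> n q) \<and> mat_kernel Lh' = mat_kernel (choi \<L> n q)
       \<and> mat_kernel Ah = mat_kernel (choi \<L> n q) \<and> mat_kernel Ah' = mat_kernel (choi \<L> n q)"
proof -
  interpret f: choi_factorization "choi \<L> n q" "n*q" m Lh Ah "hat_mat m n q B"
    unfolding Lh_def Ah_def by (rule construction_choi_factorization[OF starlin rank Ls_carr constr])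
  interpret g: choi_factorization "choi \<L> n q" "n*q" m Lh' Ah' "hat_mat m n q B'"
    unfolding Lh'_def Ah'_def by (rule construction_choi_factorization[OF starlin rank Ls'_carr constr'])
  interpret fg: two_choi_factorizations "choi \<L> n q" "n*q" m Lh Ah "hat_mat m n q B" Lh' Ah' "hat_mat m n q B'" ..
  interpret gf: two_choi_factorizations "choi \<L> n q" "n*q" m Lh' Ah' "hat_mat m n q B'" Lh Ah "hat_mat m n q B" ..
  have dims [simp]: "dim_row H' = m" "dim_col H' = m" "dim_row \<Phi> = m" "dim_col \<Phi> = m"
    "dim_row \<Xi> = m" "dim_col \<Xi> = m"
    unfolding H'_def \<Phi>_def \<Xi>_def by simp_all
  have conj_grams:
    "mat_conj H = hat_mat m n q B * mat_adjoint Lh" "mat_conj H' = hat_mat m n q B' * mat_adjoint Lh'"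
    "mat_conj \<Phi> = hat_mat m n q B * mat_adjoint Ah'" "mat_conj \<Xi> = hat_mat m n q B * mat_adjoint Lh'"
    "mat_conj (gram_form m B' A) = hat_mat m n q B' * mat_adjoint Ah"
    "mat_conj (gram_form m B' Ls) = hat_mat m n q B' * mat_adjoint Lh"
    unfolding H_def H'_def \<Phi>_def \<Xi>_def Lh_def Lh'_def Ah_def Ah'_def
    using construction_carriers[OF constr] construction_carriers[OF constr'] Ls_carr Ls'_carr
    by (simp_all add: gram_form_conj)
  have Phi_inverse: "\<Phi> * gram_form m B' A = 1\<^sub>m m" "gram_form m B' A * \<Phi> = 1\<^sub>m m"
    by (rule mat_conj_inject, simp add: mat_conj_mult conj_grams fg.Phi_mult_Phi_inv gf.Phi_mult_Phi_inv)+
  have "inj_on ((*\<^sub>v) (transpose_mat \<Xi>)) (carrier_vec m)"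
    unfolding mat_adjoint_conj[symmetric] conj_grams by (rule fg.Xi_adjoint_independent)
  then have "invertible_mat \<Xi>"
    by (rule invertible_mat_if_inj_transpose[rotated]) (simp add: carrier_matI)
  moreover have "invertible_mat \<Phi>"
    using Phi_inverse unfolding invertible_mat_def inverts_mat_def by auto
  moreover have "H = \<Phi> * H' * mat_adjoint \<Phi>"
    by (rule mat_conj_inject) (simp add: mat_conj_mult mat_conj_adjoint conj_grams fg.H_congruence)
  moreover have "H = \<Phi> * mat_adjoint \<Xi>"
    by (rule mat_conj_inject) (simp add: mat_conj_mult mat_conj_adjoint conj_grams fg.H_eq_Phi_mult_adjoint_Xi)
  moreover have "\<Phi> * H' = \<Xi>"
    by (rule mat_conj_inject) (simp add: mat_conj_mult conj_grams fg.Phi_mult_H'_eq_Xi)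
  moreover have "mat_adjoint \<Xi> = gram_form m B' Ls"
    by (rule mat_conj_inject) (simp add: mat_conj_adjoint conj_grams fg.Xi_adjoint)
  ultimately show ?thesis
    unfolding conj_grams fg.Xi_adjoint
    using Phi_inverse f.L_eq_H_mult_A g.L_eq_H_mult_A fg.L_eq_Phi_mult_L'
      fg.A'_eq_adjoint_Phi_mult_A[symmetric]
      fg.L_eq_Xi_mult_A' gf.L_eq_Xi_mult_A' f.mat_kernel_L g.mat_kernel_L f.mat_kernel_A g.mat_kernel_A
    by (intro conjI) assumption+
qed

end
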